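(* Let $\tau>0$, $\lambda=1-\tau^2$, and let $\gamma:I\subset\mathbb{R}\to H$, $\gamma(s)=(e^{iy(s)}\cos x(s),\sin x(s))$, be the profile curve of a rotationally invariant surface $\Phi(s,t)=(e^{iy(s)}\cos x(s), e^{it}\sin x(s))$ in $\mathbb{S}^3_\tau$ with Gauss curvature $K$. Then, after a suitable reparametrization of $\gamma$, there exists a function $\alpha:I\to\mathbb{R}$ such that $x,y,\alpha$ satisfy \[ \begin{aligned} x'&=\cos\alpha,\\ y'&=\frac{1}{\tau}\frac{\sqrt{1-\lambda\sin^2x}}{\cos x}\sin\alpha,\\ \alpha'&=\frac{\tan x}{\sin\alpha}\left[\frac{1-\lambda\sin^2x}{1-2\lambda\sin^2x}K-\cos^2\alpha\left(\frac{1-\lambda}{1-\lambda\sin^2x}+\frac{4\lambda\cos^2x}{1-2\lambda\sin^2x}\right)\right]. \end{aligned} \] Moreover, if $K$ is constant and $(x(s),y(s),\alpha(s))$ is a solution of this system, then the quantity \[ \mathcal{E}=\frac{(1-2\lambda\sin^2x)^2}{1-\lambda\sin^2x}\cos^2x\cos^2\alpha+K(1-\lambda\sin^2x)\sin^2x \] is constant.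
   Context: The Berger sphere $\mathbb{S}^3_\tau$ ($\tau>0$) is the set $\{(z,w)\in\mathbb{C}^2: |z|^2+|w|^2=1\}$ with the metric $g_\tau(X,Y)=\langle X,Y\rangle-(1-\tau^2)\langle X,V\rangle\langle Y,V\rangle$, where $\langle\cdot,\cdot\rangle$ is the metric induced from the Euclidean metric of $\mathbb{C}^2=\mathbb{R}^4$ and $V_{(z,w)}=(iz,iw)$. A surface is rotationally invariant if it is invariant under the group $\mathrm{Rot}=\{(z,w)\mapsto(z,e^{it}w): t\in\mathbb{R}\}$. The orbit space $\mathbb{S}^3_\tau/\mathrm{Rot}$ is identified with the closed hemisphere $H=\{(z,a)\in\mathbb{C}\times\mathbb{R}: |z|^2+a^2=1,\ a\ge0\}\subset\mathbb{S}^2(1)$, and a rotationally invariant surface is the $\mathrm{Rot}$-orbit of a profile curve $\gamma(s)=(e^{iy(s)}\cos x(s),\sin x(s))$ with $\sin x(s)\ge 0$, parametrized by $\Phi(s,t)=(e^{iy(s)}\cos x(s),e^{it}\sin x(s))$. *)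

theory Defs
  imports "HOL-Analysis.Analysis"
begin

text \<open>C-infinity on a set S (intended: open S): derivatives of all orders exist at every point of S.\<close>
definition smooth_on :: "real set \<Rightarrow> (real \<Rightarrow> real) \<Rightarrow> bool" where
  "smooth_on S f \<longleftrightarrow> (\<exists>D :: nat \<Rightarrow> real \<Rightarrow> real. D 0 = f \<and>
      (\<forall>k. \<forall>s\<in>S. (D k has_real_derivative D (Suc k) s) (at s)))"

definition berger_V :: "complex \<times> complex \<Rightarrow> complex \<times> complex" where
  "berger_V p = (\<i> * fst p, \<i> * snd p)"

definition berger_metric :: "real \<Rightarrow> complex \<times> complex \<Rightarrow> complex \<times> complex \<Rightarrow> complex \<times> complex \<Rightarrow> real" where
  "berger_metric \<tau> p X Y = inner X Y - (1 - \<tau>\<^sup>2) * inner X (berger_V p) * inner Y (berger_V p)"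

definition rot_surface :: "(real \<Rightarrow> real) \<Rightarrow> (real \<Rightarrow> real) \<Rightarrow> real \<times> real \<Rightarrow> complex \<times> complex" where
  "rot_surface x y st =
     (exp (\<i> * complex_of_real (y (fst st))) * complex_of_real (cos (x (fst st))),
      exp (\<i> * complex_of_real (snd st)) * complex_of_real (sin (x (fst st))))"

definition d_s :: "(real \<times> real \<Rightarrow> 'a::real_normed_vector) \<Rightarrow> real \<times> real \<Rightarrow> 'a" where
  "d_s f st = vector_derivative (\<lambda>\<sigma>. f (\<sigma>, snd st)) (at (fst st))"

definition d_t :: "(real \<times> real \<Rightarrow> 'a::real_normed_vector) \<Rightarrow> real \<times> real \<Rightarrow> 'a" where
  "d_t f st = vector_derivative (\<lambda>\<sigma>. f (fst st, \<sigma>)) (at (snd st))"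

definition fff_E :: "real \<Rightarrow> (real \<times> real \<Rightarrow> complex \<times> complex) \<Rightarrow> real \<times> real \<Rightarrow> real" where
  "fff_E \<tau> \<Phi> st = berger_metric \<tau> (\<Phi> st) (d_s \<Phi> st) (d_s \<Phi> st)"

definition fff_F :: "real \<Rightarrow> (real \<times> real \<Rightarrow> complex \<times> complex) \<Rightarrow> real \<times> real \<Rightarrow> real" where
  "fff_F \<tau> \<Phi> st = berger_metric \<tau> (\<Phi> st) (d_s \<Phi> st) (d_t \<Phi> st)"

definition fff_G :: "real \<Rightarrow> (real \<times> real \<Rightarrow> complex \<times> complex) \<Rightarrow> real \<times> real \<Rightarrow> real" where
  "fff_G \<tau> \<Phi> st = berger_metric \<tau> (\<Phi> st) (d_t \<Phi> st) (d_t \<Phi> st)"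

definition det3 :: "real \<Rightarrow> real \<Rightarrow> real \<Rightarrow> real \<Rightarrow> real \<Rightarrow> real \<Rightarrow> real \<Rightarrow> real \<Rightarrow> real \<Rightarrow> real" where
  "det3 a b c d e f g h i = a * (e * i - f * h) - b * (d * i - f * g) + c * (d * h - e * g)"

definition brioschi_K :: "(real \<times> real \<Rightarrow> real) \<Rightarrow> (real \<times> real \<Rightarrow> real) \<Rightarrow> (real \<times> real \<Rightarrow> real) \<Rightarrow> real \<times> real \<Rightarrow> real" where
  "brioschi_K E F G p =
    (det3 (- d_t (d_t E) p / 2 + d_s (d_t F) p - d_s (d_s G) p / 2) (d_s E p / 2) (d_s F p - d_t E p / 2)
          (d_t F p - d_s G p / 2) (E p) (F p)
          (d_t G p / 2) (F p) (G p)
   - det3 0 (d_t E p / 2) (d_s G p / 2)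
          (d_t E p / 2) (E p) (F p)
          (d_s G p / 2) (F p) (G p))
   / (E p * G p - (F p)\<^sup>2)\<^sup>2"

definition rot_gauss_curvature :: "real \<Rightarrow> (real \<Rightarrow> real) \<Rightarrow> (real \<Rightarrow> real) \<Rightarrow> real \<times> real \<Rightarrow> real" where
  "rot_gauss_curvature \<tau> x y =
     brioschi_K (fff_E \<tau> (rot_surface x y)) (fff_F \<tau> (rot_surface x y)) (fff_G \<tau> (rot_surface x y))"

end

theory Submission
  imports Defs
begin

text \<open>
  Reparametrize the profile curve to unit speed for the quotient metric
  \<open>dx\<^sup>2 + \<tau>\<^sup>2 cos\<^sup>2 x / (1 - \<lambda> sin\<^sup>2 x) dy\<^sup>2\<close> of the orbit space. Then
  \<open>(x', \<tau> cos x y' / sqrt (1 - \<lambda> sin\<^sup>2 x))\<close> is a unit vector; its angle \<open>\<alpha>\<close>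
  gives the first two equations, and differentiating \<open>x' = cos \<alpha>\<close> gives
  \<open>\<alpha>' sin \<alpha> = - x''\<close>. The coefficients \<open>E, F, G\<close> of the first fundamental form
  do not depend on \<open>t\<close>, and unit speed means \<open>EG - F\<^sup>2 = G\<close>, so Brioschi's formula
  collapses to \<open>K = (G'\<^sup>2/4 - G G''/2) / G\<^sup>2\<close> with \<open>G = sin\<^sup>2 x (1 - \<lambda> sin\<^sup>2 x)\<close>.
  This is a second order equation for \<open>x\<close>; solved for \<open>- x''\<close> it is the third equation,
  written as \<open>\<alpha>' sin \<alpha> = R\<close>. For constant \<open>K\<close> the energy is constant because along
  any curve with \<open>x' = cos \<alpha>\<close> one has \<open>\<E>' = - 2 cos \<alpha> A(x) (\<alpha>' sin \<alpha> - R)\<close>,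
  where \<open>A = (1 - 2\<lambda> sin\<^sup>2 x)\<^sup>2 cos\<^sup>2 x / (1 - \<lambda> sin\<^sup>2 x)\<close>.
\<close>

section \<open>Finitely often differentiable real functions\<close>

fun n_differentiable_on :: "nat \<Rightarrow> real set \<Rightarrow> (real \<Rightarrow> real) \<Rightarrow> bool" where
  "n_differentiable_on 0 S f \<longleftrightarrow> True"
| "n_differentiable_on (Suc n) S f \<longleftrightarrow>
     (\<forall>s\<in>S. f differentiable (at s)) \<and> n_differentiable_on n S (deriv f)"

lemma deriv_eq_on_open:
  assumes "open S" "s \<in> S" "\<And>u. u \<in> S \<Longrightarrow> f u = g u"
  shows "deriv f s = deriv g s"
proof (rule deriv_cong_ev)
  show "\<forall>\<^sub>F u in nhds s. f u = g u"
    unfolding eventually_nhds using assms by blast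
qed simp

lemma n_differentiable_on_cong:
  assumes "open S" "\<And>s. s \<in> S \<Longrightarrow> f s = g s" "n_differentiable_on n S f"
  shows "n_differentiable_on n S g"
  using assms(2,3)
proof (induction n arbitrary: f g)
  case (Suc n)
  have "g differentiable (at s)" if s: "s \<in> S" for s
  proof -
    have "(f has_real_derivative deriv f s) (at s)"
      using Suc.prems(2) s by (simp add: DERIV_deriv_iff_real_differentiable)
    then have "(g has_real_derivative deriv f s) (at s)"
      by (rule has_field_derivative_transform_within_open[OF _ assms(1) s Suc.prems(1)])
    then show ?thesis
      using real_differentiable_def by blast
  qed
  moreover have "n_differentiable_on n S (deriv g)"
  proof (rule Suc.IH)
    show "deriv f s = deriv g s" if "s \<in> S" for s
      by (rule deriv_eq_on_open[OF assms(1) that Suc.prems(1)])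
    show "n_differentiable_on n S (deriv f)"
      using Suc.prems(2) by simp
  qed
  ultimately show ?case
    by simp
qed simp

lemma n_differentiable_on_Suc_imp: "n_differentiable_on (Suc n) S f \<Longrightarrow> n_differentiable_on n S f"
  by (induction n arbitrary: f) simp_all

lemma n_differentiable_on_deriv:
  "n_differentiable_on (Suc n) S f \<Longrightarrow> n_differentiable_on n S (deriv f)"
  by simp

lemma n_differentiable_on_mono:
  assumes "m \<le> n" "n_differentiable_on n S f"
  shows "n_differentiable_on m S f"
  using assms
proof (induction n)
  case (Suc n)
  then show ?case
    using n_differentiable_on_Suc_imp by (cases "m = Suc n") auto
qed simp

lemma n_differentiable_on_imp_DERIV:
  "n_differentiable_on (Suc n) S f \<Longrightarrow> s \<in> S \<Longrightarrow> (f has_real_derivative deriv f s) (at s)"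
  by (simp add: DERIV_deriv_iff_real_differentiable)

lemma n_differentiable_on_SucI:
  assumes "open S" "\<And>s. s \<in> S \<Longrightarrow> (f has_real_derivative f' s) (at s)" "n_differentiable_on n S f'"
  shows "n_differentiable_on (Suc n) S f"
proof -
  have "n_differentiable_on n S (deriv f)"
    using assms
    by (intro n_differentiable_on_cong[OF assms(1) _ assms(3)]) (simp add: DERIV_imp_deriv[symmetric])
  then show ?thesis
    using assms(2) real_differentiable_def by auto
qed

lemma n_differentiable_on_const: "n_differentiable_on n S (\<lambda>_. c)"
  by (induction n arbitrary: c) simp_all

lemma n_differentiable_on_add:
  assumes "open S" "n_differentiable_on n S f" "n_differentiable_on n S g"
  shows "n_differentiable_on n S (\<lambda>s. f s + g s)"
  using assms(2,3)
proof (induction n arbitrary: f g)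
  case (Suc n)
  have "((\<lambda>s. f s + g s) has_real_derivative deriv f s + deriv g s) (at s)" if "s \<in> S" for s
    using Suc.prems that by (intro DERIV_add n_differentiable_on_imp_DERIV)
  then show ?case
    using Suc by (intro n_differentiable_on_SucI[OF assms(1)]) auto
qed simp

lemma n_differentiable_on_mult:
  assumes "open S" "n_differentiable_on n S f" "n_differentiable_on n S g"
  shows "n_differentiable_on n S (\<lambda>s. f s * g s)"
  using assms(2,3)
proof (induction n arbitrary: f g)
  case (Suc n)
  have "n_differentiable_on n S f" "n_differentiable_on n S g"
    using Suc.prems n_differentiable_on_Suc_imp by blast+
  then have "n_differentiable_on n S (\<lambda>s. deriv f s * g s + deriv g s * f s)"
    using Suc.prems by (intro n_differentiable_on_add[OF assms(1)] Suc.IH) auto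
  moreover have "((\<lambda>s. f s * g s) has_real_derivative deriv f s * g s + deriv g s * f s) (at s)"
    if "s \<in> S" for s
    using Suc.prems that by (intro DERIV_mult n_differentiable_on_imp_DERIV)
  ultimately show ?case
    by (intro n_differentiable_on_SucI[OF assms(1)])
qed simp

lemma n_differentiable_on_compose:
  assumes "open S" "\<And>s. s \<in> S \<Longrightarrow> f s \<in> T"
    and "n_differentiable_on n T g" "n_differentiable_on n S f"
  shows "n_differentiable_on n S (\<lambda>s. g (f s))"
  using assms(2-4)
proof (induction n arbitrary: f g)
  case (Suc n)
  have "n_differentiable_on n S f"
    using Suc.prems(3) n_differentiable_on_Suc_imp by blast
  then have "n_differentiable_on n S (\<lambda>s. deriv g (f s) * deriv f s)"
    using Suc.prems by (intro n_differentiable_on_mult[OF assms(1) Suc.IH]) auto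
  moreover have "((\<lambda>s. g (f s)) has_real_derivative deriv g (f s) * deriv f s) (at s)"
    if "s \<in> S" for s
  proof -
    have "(g has_real_derivative deriv g (f s)) (at (f s))"
      using Suc.prems(2) Suc.prems(1)[OF that] by (rule n_differentiable_on_imp_DERIV)
    moreover have "(f has_real_derivative deriv f s) (at s)"
      using Suc.prems(3) that by (rule n_differentiable_on_imp_DERIV)
    ultimately show ?thesis
      by (rule DERIV_chain2)
  qed
  ultimately show ?case
    by (intro n_differentiable_on_SucI[OF assms(1)])
qed simp

lemma n_differentiable_on_inverse:
  assumes "open S" "n_differentiable_on n S f" "\<And>s. s \<in> S \<Longrightarrow> f s \<noteq> 0"
  shows "n_differentiable_on n S (\<lambda>s. inverse (f s))"
  using assms(2)
proof (induction n)
  case (Suc n)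
  have "n_differentiable_on n S (\<lambda>s. inverse (f s))"
    using Suc n_differentiable_on_Suc_imp by blast
  then have "n_differentiable_on n S (\<lambda>s. -1 * (deriv f s * (inverse (f s) * inverse (f s))))"
    using Suc.prems
    by (intro n_differentiable_on_mult[OF assms(1) n_differentiable_on_const]
        n_differentiable_on_mult[OF assms(1) _ n_differentiable_on_mult[OF assms(1)]]) auto
  moreover have "((\<lambda>s. inverse (f s)) has_real_derivative
      -1 * (deriv f s * (inverse (f s) * inverse (f s)))) (at s)" if "s \<in> S" for s
    using DERIV_inverse'[OF n_differentiable_on_imp_DERIV[OF Suc.prems that] assms(3)[OF that]]
    by (simp add: algebra_simps)
  ultimately show ?case
    by (intro n_differentiable_on_SucI[OF assms(1)])
qed simp

lemma n_differentiable_on_diff: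
  assumes "open S" "n_differentiable_on n S f" "n_differentiable_on n S g"
  shows "n_differentiable_on n S (\<lambda>s. f s - g s)"
  using n_differentiable_on_add[OF assms(1,2)
      n_differentiable_on_mult[OF assms(1) n_differentiable_on_const[of n S "-1"] assms(3)]]
  by (rule n_differentiable_on_cong[OF assms(1), rotated]) simp

lemma n_differentiable_on_divide:
  assumes "open S" "n_differentiable_on n S f" "n_differentiable_on n S g" "\<And>s. s \<in> S \<Longrightarrow> g s \<noteq> 0"
  shows "n_differentiable_on n S (\<lambda>s. f s / g s)"
  unfolding divide_inverse
  by (rule n_differentiable_on_mult[OF assms(1,2) n_differentiable_on_inverse[OF assms(1,3,4)]])

lemma n_differentiable_on_power2:
  assumes "open S" "n_differentiable_on n S f"
  shows "n_differentiable_on n S (\<lambda>s. (f s)\<^sup>2)"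
  unfolding power2_eq_square by (rule n_differentiable_on_mult[OF assms(1,2,2)])

lemma n_differentiable_on_sin_cos: "n_differentiable_on n UNIV sin \<and> n_differentiable_on n UNIV cos"
proof (induction n)
  case (Suc n)
  have "n_differentiable_on n UNIV (\<lambda>s. -1 * sin s)"
    using Suc by (intro n_differentiable_on_mult n_differentiable_on_const) auto
  then have "n_differentiable_on (Suc n) UNIV cos"
    by (rule n_differentiable_on_SucI[OF open_UNIV, rotated]) (auto intro!: derivative_eq_intros)
  moreover have "n_differentiable_on (Suc n) UNIV sin"
    using Suc by (intro n_differentiable_on_SucI[OF open_UNIV, of _ cos]) (auto intro: DERIV_sin)
  ultimately show ?case
    by blast
qed simp

lemma n_differentiable_on_sin_cos_compose:
  assumes "open I" "n_differentiable_on n I x"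
  shows "n_differentiable_on n I (\<lambda>s. sin (x s))" "n_differentiable_on n I (\<lambda>s. cos (x s))"
  using n_differentiable_on_compose[OF assms(1) _ _ assms(2), where T = UNIV] n_differentiable_on_sin_cos
  by simp_all

lemma n_differentiable_on_sqrt: "n_differentiable_on n {0<..} sqrt"
proof (induction n)
  case (Suc n)
  have "n_differentiable_on n {0<..} (\<lambda>s. inverse (sqrt s) * (1 / 2))"
    using Suc by (intro n_differentiable_on_mult n_differentiable_on_inverse n_differentiable_on_const) auto
  then show ?case
    by (rule n_differentiable_on_SucI[OF open_greaterThan, rotated])
       (auto intro!: derivative_eq_intros simp: field_simps)
qed simp

lemma n_differentiable_on_funpow_deriv:
  "n_differentiable_on (k + n) S f \<Longrightarrow> n_differentiable_on n S ((deriv ^^ k) f)"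
  by (induction k arbitrary: f) (simp_all add: funpow_Suc_right del: funpow.simps)

lemma n_differentiable_on_imp_continuous_on:
  "n_differentiable_on (Suc n) S f \<Longrightarrow> continuous_on S f"
  by (simp add: continuous_at_imp_continuous_on differentiable_imp_continuous_within)

lemma smooth_on_iff_n_differentiable_on:
  assumes "open S"
  shows "smooth_on S f \<longleftrightarrow> (\<forall>n. n_differentiable_on n S f)"
proof
  assume "smooth_on S f"
  then obtain D where "D 0 = f" "\<And>k s. s \<in> S \<Longrightarrow> (D k has_real_derivative D (Suc k) s) (at s)"
    unfolding smooth_on_def by blast
  moreover have "n_differentiable_on n S (D 0)"
    if "\<And>k s. s \<in> S \<Longrightarrow> (D k has_real_derivative D (Suc k) s) (at s)" for n D
    using that
  proof (induction n arbitrary: D)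
    case (Suc n)
    then show ?case
      by (intro n_differentiable_on_SucI[OF assms, of _ "D 1"]) (auto simp: Suc.IH[of "\<lambda>k. D (Suc k)"])
  qed simp
  ultimately show "\<forall>n. n_differentiable_on n S f"
    by blast
next
  assume smooth: "\<forall>n. n_differentiable_on n S f"
  have "((deriv ^^ k) f has_real_derivative (deriv ^^ Suc k) f s) (at s)" if "s \<in> S" for k s
    using n_differentiable_on_funpow_deriv[of k 1 S f] smooth that
    by (simp add: DERIV_deriv_iff_real_differentiable)
  then show "smooth_on S f"
    unfolding smooth_on_def by (intro exI[of _ "\<lambda>k. (deriv ^^ k) f"]) simp
qed

section \<open>Reparametrizations and angle functions\<close>

lemma DERIV_zero_imp_constant_on_interval:
  fixes f :: "real \<Rightarrow> real"
  assumes "is_interval J" "\<And>s. s \<in> J \<Longrightarrow> (f has_real_derivative 0) (at s)"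
  obtains k where "\<And>s. s \<in> J \<Longrightarrow> f s = k"
  using has_field_derivative_zero_constant[OF is_interval_convex_1[THEN iffD1, OF assms(1)]]
    assms(2) has_field_derivative_at_within by blast

lemma DERIV_eq_zero_if_constant_on_open:
  fixes f :: "real \<Rightarrow> real"
  assumes "open S" "s \<in> S" "\<And>u. u \<in> S \<Longrightarrow> f u = k" "(f has_real_derivative D) (at s)"
  shows "D = 0"
proof -
  have "(f has_real_derivative 0) (at s)"
    by (rule has_field_derivative_transform_within_open[OF DERIV_const assms(1,2)]) (simp add: assms(3))
  then show ?thesis
    using assms(4) DERIV_unique by blast
qed

lemma deriv_cos_comp_on_open:
  assumes "open J" "s \<in> J" "\<And>s. s \<in> J \<Longrightarrow> c s = cos (\<alpha> s)" "(\<alpha> has_real_derivative a) (at s)"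
  shows "deriv c s = - sin (\<alpha> s) * a"
proof -
  have "deriv c s = deriv (\<lambda>s. cos (\<alpha> s)) s"
    using assms(3) by (rule deriv_eq_on_open[OF assms(1,2)])
  also have "\<dots> = - sin (\<alpha> s) * a"
    using assms(4) by (intro DERIV_imp_deriv) (auto intro!: derivative_eq_intros)
  finally show ?thesis .
qed

lemma exists_antiderivative_on_open_interval:
  fixes f :: "real \<Rightarrow> real"
  assumes "open I" "is_interval I" "continuous_on I f"
  obtains F where "\<And>x. x \<in> I \<Longrightarrow> (F has_real_derivative f x) (at x)"
proof (cases "I = {}")
  case False
  then obtain c where c: "c \<in> I"
    by blast
  have "((\<lambda>u. LBINT y=c..u. f y) has_real_derivative f x) (at x)" if x: "x \<in> I" for x
  proof -
    have "min c x \<in> I" "max c x \<in> I"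
      using c x by (simp_all add: min_def max_def)
    then obtain r1 r2 where r: "r1 > 0" "ball (min c x) r1 \<subseteq> I" "r2 > 0" "ball (max c x) r2 \<subseteq> I"
      using assms(1) open_contains_ball by meson
    define a b where "a = min c x - r1 / 2" and "b = max c x + r2 / 2"
    have "a \<in> ball (min c x) r1" "b \<in> ball (max c x) r2"
      using r by (simp_all add: a_def b_def dist_real_def)
    then have "a \<in> I" "b \<in> I"
      using r by blast+
    then have "{a..b} \<subseteq> I"
      using mem_is_interval_1_I[OF assms(2)] by (meson atLeastAtMost_iff subsetI)
    then have "((\<lambda>u. LBINT y=c..u. f y) has_vector_derivative f x) (at x within {a..b})"
      using r by (intro interval_integral_FTC2 continuous_on_subset[OF assms(3)]) (auto simp: a_def b_def)
    then have "((\<lambda>u. LBINT y=c..u. f y) has_vector_derivative f x) (at x within {a<..<b})"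
      by (rule has_vector_derivative_within_subset) auto
    moreover have "x \<in> {a<..<b}"
      using r by (auto simp: a_def b_def)
    ultimately show ?thesis
      unfolding has_real_derivative_iff_has_vector_derivative
      using has_vector_derivative_within_open[OF _ open_greaterThanLessThan] by blast
  qed
  then show ?thesis
    by (rule that)
qed (rule that, simp)

lemma DERIV_pos_imp_strict_mono_on_interval:
  fixes \<psi> :: "real \<Rightarrow> real"
  assumes "is_interval I" "\<And>s. s \<in> I \<Longrightarrow> (\<psi> has_real_derivative L s) (at s)" "\<And>s. s \<in> I \<Longrightarrow> L s > 0"
  shows "strict_mono_on I \<psi>"
proof (rule strict_mono_onI)
  fix a b assume ab: "a \<in> I" "b \<in> I" "a < b"
  then have "{a..b} \<subseteq> I"
    using mem_is_interval_1_I[OF assms(1)] by (meson atLeastAtMost_iff subsetI)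
  show "\<psi> a < \<psi> b"
  proof (rule DERIV_pos_imp_increasing[OF ab(3)])
    fix z assume "a \<le> z" "z \<le> b"
    then have "z \<in> I"
      using \<open>{a..b} \<subseteq> I\<close> by auto
    then show "\<exists>y. DERIV \<psi> z :> y \<and> 0 < y"
      using assms(2,3) by blast
  qed
qed

lemma n_differentiable_on_autonomous_ode:
  assumes "open J" "\<And>\<sigma>. \<sigma> \<in> J \<Longrightarrow> \<phi> \<sigma> \<in> I" "\<And>n. n_differentiable_on n I F"
    and "\<And>\<sigma>. \<sigma> \<in> J \<Longrightarrow> (\<phi> has_real_derivative F (\<phi> \<sigma>)) (at \<sigma>)"
  shows "n_differentiable_on n J \<phi>"
proof (induction n)
  case (Suc n)
  have "n_differentiable_on n J (\<lambda>\<sigma>. F (\<phi> \<sigma>))"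
    using assms(2,3) Suc.IH by (rule n_differentiable_on_compose[OF assms(1)])
  then show ?case
    using assms(4) by (rule n_differentiable_on_SucI[OF assms(1), rotated])
qed simp

lemma reparametrization_with_speed:
  assumes I: "open I" "is_interval I"
    and L: "\<And>n. n_differentiable_on n I L" "\<And>s. s \<in> I \<Longrightarrow> L s > 0"
  obtains J \<phi> where "open J" "is_interval J" "bij_betw \<phi> J I" "\<And>n. n_differentiable_on n J \<phi>"
    "\<And>\<sigma>. \<sigma> \<in> J \<Longrightarrow> (\<phi> has_real_derivative inverse (L (\<phi> \<sigma>))) (at \<sigma>)"
proof -
  obtain \<psi> where \<psi>: "\<And>s. s \<in> I \<Longrightarrow> (\<psi> has_real_derivative L s) (at s)"
    using exists_antiderivative_on_open_interval[OF I n_differentiable_on_imp_continuous_on[OF L(1)]]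
    by blast
  have cont: "continuous_on I \<psi>"
    using \<psi> by (meson DERIV_isCont continuous_at_imp_continuous_on)
  have inj: "inj_on \<psi> I"
    using DERIV_pos_imp_strict_mono_on_interval[OF I(2) \<psi> L(2)] by (rule strict_mono_on_imp_inj_on)
  define J \<phi> where "J = \<psi> ` I" and "\<phi> = inv_into I \<psi>"
  have "open J"
    unfolding J_def using invariance_of_domain[OF cont I(1) inj] .
  have "is_interval J"
    unfolding J_def is_interval_connected_1
    by (rule connected_continuous_image[OF cont is_interval_connected[OF I(2)]])
  have bij: "bij_betw \<phi> J I"
    unfolding \<phi>_def J_def using inj by (simp add: bij_betw_inv_into inj_on_imp_bij_betw)
  have \<phi>': "(\<phi> has_real_derivative inverse (L (\<phi> \<sigma>))) (at \<sigma>)" if "\<sigma> \<in> J" for \<sigma>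
  proof -
    obtain s where s: "s \<in> I" "\<sigma> = \<psi> s"
      using \<open>\<sigma> \<in> J\<close> unfolding J_def by blast
    have "(\<phi> has_derivative (*) (inverse (L s))) (at (\<psi> s))"
      using s(1) L(2)[OF s(1)] \<psi>[OF s(1)] inj
      by (intro has_derivative_inverse_strong[OF I(1) s(1) cont, of \<phi> "(*) (L s)"])
         (auto simp: \<phi>_def has_field_derivative_def)
    moreover have "\<phi> \<sigma> = s"
      unfolding s(2) \<phi>_def using inj s(1) by simp
    ultimately show ?thesis
      by (simp add: s(2) has_field_derivative_def mult.commute)
  qed
  have "n_differentiable_on n I (\<lambda>s. inverse (L s))" for n
    using L by (intro n_differentiable_on_inverse[OF I(1)]) (auto simp: less_imp_neq[symmetric])
  then have "n_differentiable_on n J \<phi>" for n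
    using bij_betw_apply[OF bij] \<phi>' by (intro n_differentiable_on_autonomous_ode[OF \<open>open J\<close>])
  then show ?thesis
    using that \<open>open J\<close> \<open>is_interval J\<close> bij \<phi>' by blast
qed

lemma rotation_ode_unique:
  fixes c w \<alpha> h :: "real \<Rightarrow> real"
  assumes J: "is_interval J" "s0 \<in> J" "s \<in> J"
    and c: "\<And>s. s \<in> J \<Longrightarrow> (c has_real_derivative - w s * h s) (at s)"
    and w: "\<And>s. s \<in> J \<Longrightarrow> (w has_real_derivative c s * h s) (at s)"
    and \<alpha>: "\<And>s. s \<in> J \<Longrightarrow> (\<alpha> has_real_derivative h s) (at s)"
    and init: "c s0 = cos (\<alpha> s0)" "w s0 = sin (\<alpha> s0)"
  shows "c s = cos (\<alpha> s) \<and> w s = sin (\<alpha> s)"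
proof -
  define E where "E s = (c s - cos (\<alpha> s))\<^sup>2 + (w s - sin (\<alpha> s))\<^sup>2" for s
  have "(E has_real_derivative 0) (at s)" if s: "s \<in> J" for s
  proof -
    have "(E has_real_derivative 2 * (c s - cos (\<alpha> s)) * (- w s * h s + sin (\<alpha> s) * h s)
        + 2 * (w s - sin (\<alpha> s)) * (c s * h s - cos (\<alpha> s) * h s)) (at s)"
      unfolding E_def using c[OF s] w[OF s] \<alpha>[OF s]
      by (auto intro!: derivative_eq_intros simp: algebra_simps)
    then show ?thesis
      by (simp add: algebra_simps)
  qed
  then obtain k where k: "\<And>s. s \<in> J \<Longrightarrow> E s = k"
    using DERIV_zero_imp_constant_on_interval[OF J(1)] by blast
  have "E s = E s0"
    using k[OF J(2)] k[OF J(3)] by simp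
  also have "\<dots> = 0"
    unfolding E_def using init by simp
  finally show ?thesis
    unfolding E_def by (simp add: add_nonneg_eq_0_iff)
qed

lemma exists_angle_function:
  fixes c w c' w' :: "real \<Rightarrow> real"
  assumes J: "open J" "is_interval J"
    and c: "\<And>s. s \<in> J \<Longrightarrow> (c has_real_derivative c' s) (at s)"
    and w: "\<And>s. s \<in> J \<Longrightarrow> (w has_real_derivative w' s) (at s)"
    and cont: "continuous_on J (\<lambda>s. c s * w' s - w s * c' s)"
    and unit: "\<And>s. s \<in> J \<Longrightarrow> (c s)\<^sup>2 + (w s)\<^sup>2 = 1"
  obtains \<alpha> where "\<And>s. s \<in> J \<Longrightarrow> (\<alpha> has_real_derivative c s * w' s - w s * c' s) (at s)"
    "\<And>s. s \<in> J \<Longrightarrow> cos (\<alpha> s) = c s" "\<And>s. s \<in> J \<Longrightarrow> sin (\<alpha> s) = w s"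
proof (cases "J = {}")
  case False
  define h where "h s = c s * w' s - w s * c' s" for s
  obtain s0 where s0: "s0 \<in> J"
    using False by blast
  obtain F where F: "\<And>s. s \<in> J \<Longrightarrow> (F has_real_derivative h s) (at s)"
    using exists_antiderivative_on_open_interval[OF J cont] unfolding h_def by blast
  obtain \<theta> where \<theta>: "c s0 = cos \<theta>" "w s0 = sin \<theta>"
    using sincos_total_2pi[OF unit[OF s0]] by metis
  define \<alpha> where "\<alpha> s = F s - F s0 + \<theta>" for s
  have \<alpha>: "(\<alpha> has_real_derivative h s) (at s)" if "s \<in> J" for s
    unfolding \<alpha>_def using F[OF that] by (auto intro!: derivative_eq_intros)
  have rotation: "c' s = - w s * h s \<and> w' s = c s * h s" if s: "s \<in> J" for s
  proof -
    have "((\<lambda>u. (c u)\<^sup>2 + (w u)\<^sup>2) has_real_derivative 2 * (c s * c' s + w s * w' s)) (at s)"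
      using c[OF s] w[OF s] by (auto intro!: derivative_eq_intros simp: algebra_simps)
    then have "2 * (c s * c' s + w s * w' s) = 0"
      by (rule DERIV_eq_zero_if_constant_on_open[OF J(1) s, rotated]) (rule unit)
    then show ?thesis
      using unit[OF s] unfolding h_def by algebra
  qed
  have cos_sin: "c s = cos (\<alpha> s) \<and> w s = sin (\<alpha> s)" if "s \<in> J" for s
  proof (rule rotation_ode_unique[OF J(2) s0 that _ _ \<alpha>])
    show "(c has_real_derivative - w u * h u) (at u)" "(w has_real_derivative c u * h u) (at u)"
      if "u \<in> J" for u
      using c[OF that] w[OF that] rotation[OF that] by simp_all
    show "c s0 = cos (\<alpha> s0)" "w s0 = sin (\<alpha> s0)"
      using \<theta> by (simp_all add: \<alpha>_def)
  qed
  show ?thesis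
  proof (rule that)
    show "(\<alpha> has_real_derivative c s * w' s - w s * c' s) (at s)" if "s \<in> J" for s
      using \<alpha>[OF that] unfolding h_def .
    show "cos (\<alpha> s) = c s" "sin (\<alpha> s) = w s" if "s \<in> J" for s
      using cos_sin[OF that] by simp_all
  qed
qed (rule that, simp_all)

section \<open>Gauss curvature of rotational surfaces in the Berger sphere\<close>

lemma one_minus_mult_sin_sq_pos:
  fixes lam u :: real
  assumes "lam < 1"
  shows "0 < 1 - lam * (sin u)\<^sup>2"
proof -
  have "lam * (sin u)\<^sup>2 \<le> max lam 0"
    using abs_square_le_1[of "sin u", THEN iffD2, OF abs_sin_le_one] zero_le_power2[of "sin u"]
    by (cases "lam \<ge> 0") (auto intro: mult_left_le mult_nonpos_nonneg)
  then show ?thesis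
    using assms by linarith
qed

lemma rot_surface_eq:
  "rot_surface x y (s, t) =
    (of_real (cos (y s) * cos (x s)) + \<i> * of_real (sin (y s) * cos (x s)),
     of_real (cos t * sin (x s)) + \<i> * of_real (sin t * sin (x s)))"
  unfolding rot_surface_def by (simp add: cis_conv_exp[symmetric] complex_eq_iff)

lemma d_s_rot_surface:
  assumes "(x has_real_derivative x') (at s)" "(y has_real_derivative y') (at s)"
  shows "d_s (rot_surface x y) (s, t) =
    (of_real (- sin (y s) * y' * cos (x s) - cos (y s) * sin (x s) * x')
       + \<i> * of_real (cos (y s) * y' * cos (x s) - sin (y s) * sin (x s) * x'),
     of_real (cos t * cos (x s) * x') + \<i> * of_real (sin t * cos (x s) * x'))"
  unfolding d_s_def fst_conv snd_conv rot_surface_eq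
  by (rule vector_derivative_at) (use assms in \<open>auto intro!: derivative_eq_intros simp: algebra_simps\<close>)

lemma d_t_rot_surface:
  "d_t (rot_surface x y) (s, t) = (0, of_real (- sin t * sin (x s)) + \<i> * of_real (cos t * sin (x s)))"
  unfolding d_t_def fst_conv snd_conv rot_surface_eq
  by (rule vector_derivative_at) (auto intro!: derivative_eq_intros simp: algebra_simps)

lemma fff_E_rot_surface:
  assumes "(x has_real_derivative x') (at s)" "(y has_real_derivative y') (at s)"
  shows "fff_E \<tau> (rot_surface x y) (s, t) = x'\<^sup>2 + y'\<^sup>2 * (cos (x s))\<^sup>2 * (1 - (1 - \<tau>\<^sup>2) * (cos (x s))\<^sup>2)"
  unfolding fff_E_def berger_metric_def berger_V_def d_s_rot_surface[OF assms] rot_surface_eq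
  by (simp add: inner_complex_def)
    (use sin_cos_squared_add[of "y s"] sin_cos_squared_add[of t] sin_cos_squared_add[of "x s"] in algebra)

lemma fff_F_rot_surface:
  assumes "(x has_real_derivative x') (at s)" "(y has_real_derivative y') (at s)"
  shows "fff_F \<tau> (rot_surface x y) (s, t) = - (1 - \<tau>\<^sup>2) * y' * (cos (x s))\<^sup>2 * (sin (x s))\<^sup>2"
  unfolding fff_F_def berger_metric_def berger_V_def d_s_rot_surface[OF assms] d_t_rot_surface
    rot_surface_eq
  by (simp add: inner_complex_def)
    (use sin_cos_squared_add[of "y s"] sin_cos_squared_add[of t] sin_cos_squared_add[of "x s"] in algebra)

lemma fff_G_rot_surface:
  "fff_G \<tau> (rot_surface x y) (s, t) = (sin (x s))\<^sup>2 * (1 - (1 - \<tau>\<^sup>2) * (sin (x s))\<^sup>2)"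
  unfolding fff_G_def berger_metric_def berger_V_def d_t_rot_surface rot_surface_eq
  by (simp add: inner_complex_def) (use sin_cos_squared_add[of t] in algebra)

lemma vector_derivative_eq_on_open:
  fixes h k :: "real \<Rightarrow> real"
  assumes "open S" "s \<in> S" "\<And>u. u \<in> S \<Longrightarrow> h u = k u" "(k has_real_derivative k') (at s)"
  shows "vector_derivative h (at s) = k'"
proof (rule vector_derivative_at)
  show "(h has_vector_derivative k') (at s)"
    using assms(4) unfolding has_real_derivative_iff_has_vector_derivative
    by (rule has_vector_derivative_transform_within_open[OF _ assms(1,2)]) (simp add: assms(3))
qed

lemma brioschi_K_t_independent:
  fixes E F G :: "real \<times> real \<Rightarrow> real"
  assumes J: "open J" "\<sigma> \<in> J"
    and E: "\<And>s t. s \<in> J \<Longrightarrow> E (s, t) = e s" and F: "\<And>s t. s \<in> J \<Longrightarrow> F (s, t) = f s"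
    and G: "\<And>s t. s \<in> J \<Longrightarrow> G (s, t) = g s"
    and e: "\<And>s. s \<in> J \<Longrightarrow> (e has_real_derivative e' s) (at s)"
    and f: "\<And>s. s \<in> J \<Longrightarrow> (f has_real_derivative f' s) (at s)"
    and g: "\<And>s. s \<in> J \<Longrightarrow> (g has_real_derivative g' s) (at s)"
    and g': "(g' has_real_derivative g'') (at \<sigma>)"
  shows "brioschi_K E F G (\<sigma>, t) =
    (e' \<sigma> * g' \<sigma> * g \<sigma> / 4 - f' \<sigma> * g' \<sigma> * f \<sigma> / 2 + e \<sigma> * (g' \<sigma>)\<^sup>2 / 4
      - g'' / 2 * (e \<sigma> * g \<sigma> - (f \<sigma>)\<^sup>2)) / (e \<sigma> * g \<sigma> - (f \<sigma>)\<^sup>2)\<^sup>2"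
proof -
  have d_t_zero: "d_t H (s, t) = 0" if "s \<in> J" "\<And>t. H (s, t) = h s" for H :: "real \<times> real \<Rightarrow> real" and h s t
    unfolding d_t_def using that by simp
  have d_s_eq: "d_s H (s, t) = h'"
    if "s \<in> J" "\<And>s t. s \<in> J \<Longrightarrow> H (s, t) = h s" "(h has_real_derivative h') (at s)"
    for H :: "real \<times> real \<Rightarrow> real" and h h' s t
    unfolding d_s_def fst_conv snd_conv using that by (intro vector_derivative_eq_on_open[OF J(1)]) auto
  have "d_t (d_t E) (\<sigma>, t) = 0" "d_s (d_t F) (\<sigma>, t) = 0"
    using J E F by (auto intro!: d_t_zero d_s_eq[where h = "\<lambda>_. 0"])
  moreover have d_s_G: "d_s G (s, t) = g' s" if "s \<in> J" for s t
    using d_s_eq[OF that G g[OF that]] .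
  moreover have "d_s (d_s G) (\<sigma>, t) = g''"
    using d_s_eq[OF J(2) _ g', of "d_s G"] d_s_G by blast
  moreover have "d_t E (\<sigma>, t) = 0" "d_t F (\<sigma>, t) = 0" "d_t G (\<sigma>, t) = 0"
    using J E F G by (auto intro!: d_t_zero)
  moreover have "d_s E (\<sigma>, t) = e' \<sigma>" "d_s F (\<sigma>, t) = f' \<sigma>"
    using d_s_eq[OF J(2) E e[OF J(2)]] d_s_eq[OF J(2) F f[OF J(2)]] by simp_all
  ultimately show ?thesis
    unfolding brioschi_K_def using J E F G
    by (simp add: det3_def field_simps power2_eq_square)
qed

lemma brioschi_K_t_independent_normalized:
  fixes E F G :: "real \<times> real \<Rightarrow> real"
  assumes J: "open J" "\<sigma> \<in> J"
    and E: "\<And>s t. s \<in> J \<Longrightarrow> E (s, t) = e s" and F: "\<And>s t. s \<in> J \<Longrightarrow> F (s, t) = f s"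
    and G: "\<And>s t. s \<in> J \<Longrightarrow> G (s, t) = g s"
    and e: "\<And>s. s \<in> J \<Longrightarrow> (e has_real_derivative e' s) (at s)"
    and f: "\<And>s. s \<in> J \<Longrightarrow> (f has_real_derivative f' s) (at s)"
    and g: "\<And>s. s \<in> J \<Longrightarrow> (g has_real_derivative g' s) (at s)"
    and g': "(g' has_real_derivative g'') (at \<sigma>)"
    and normalized: "\<And>s. s \<in> J \<Longrightarrow> e s * g s - (f s)\<^sup>2 = g s"
  shows "brioschi_K E F G (\<sigma>, t) = ((g' \<sigma>)\<^sup>2 / 4 - g \<sigma> * g'' / 2) / (g \<sigma>)\<^sup>2"
proof -
  have "((\<lambda>s. e s * g s - (f s)\<^sup>2 - g s) has_real_derivative
      e' \<sigma> * g \<sigma> + e \<sigma> * g' \<sigma> - 2 * f \<sigma> * f' \<sigma> - g' \<sigma>) (at \<sigma>)"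
    using e[OF J(2)] f[OF J(2)] g[OF J(2)] by (auto intro!: derivative_eq_intros)
  then have deriv_normalized: "e' \<sigma> * g \<sigma> + e \<sigma> * g' \<sigma> - 2 * f \<sigma> * f' \<sigma> - g' \<sigma> = 0"
    by (rule DERIV_eq_zero_if_constant_on_open[OF J, rotated]) (simp add: normalized)
  have "e' \<sigma> * g' \<sigma> * g \<sigma> / 4 - f' \<sigma> * g' \<sigma> * f \<sigma> / 2 + e \<sigma> * (g' \<sigma>)\<^sup>2 / 4
      - g'' / 2 * (e \<sigma> * g \<sigma> - (f \<sigma>)\<^sup>2)
    = g' \<sigma> / 4 * (e' \<sigma> * g \<sigma> + e \<sigma> * g' \<sigma> - 2 * f \<sigma> * f' \<sigma>) - g'' / 2 * (e \<sigma> * g \<sigma> - (f \<sigma>)\<^sup>2)"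
    by (simp add: algebra_simps power2_eq_square)
  also have "\<dots> = (g' \<sigma>)\<^sup>2 / 4 - g \<sigma> * g'' / 2"
    using deriv_normalized normalized[OF J(2)] by (simp add: power2_eq_square)
  finally show ?thesis
    by (subst brioschi_K_t_independent[OF J E F G e f g g']) (simp_all add: normalized[OF J(2)])
qed

text \<open>
  The squared speed of the profile curve for the quotient metric of the orbit space;
  for the rotational surface \<open>EG - F\<^sup>2 = G \<cdot> orbit_speed_sq\<close>.
\<close>

definition orbit_speed_sq :: "real \<Rightarrow> (real \<Rightarrow> real) \<Rightarrow> (real \<Rightarrow> real) \<Rightarrow> real \<Rightarrow> real" where
  "orbit_speed_sq \<tau> x y s =
     (deriv x s)\<^sup>2 + \<tau>\<^sup>2 * (cos (x s))\<^sup>2 * (deriv y s)\<^sup>2 / (1 - (1 - \<tau>\<^sup>2) * (sin (x s))\<^sup>2)"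

text \<open>
  The right-hand side of the paper's equation for \<open>\<alpha>'\<close>, multiplied by \<open>sin \<alpha>\<close>;
  the argument \<open>p\<close> stands for \<open>cos \<alpha>\<close>, which is \<open>x'\<close> on unit-speed curves.
  The energy \<open>rot_energy\<close> below uses the same convention.
\<close>

definition rot_angle_rhs :: "real \<Rightarrow> real \<Rightarrow> real \<Rightarrow> real \<Rightarrow> real" where
  "rot_angle_rhs lam K u p =
     tan u * ((1 - lam * (sin u)\<^sup>2) / (1 - 2 * lam * (sin u)\<^sup>2) * K
       - p\<^sup>2 * ((1 - lam) / (1 - lam * (sin u)\<^sup>2) + 4 * lam * (cos u)\<^sup>2 / (1 - 2 * lam * (sin u)\<^sup>2)))"

text \<open>
  The hypothesis on \<open>K\<close> is \<open>K = (G'\<^sup>2/4 - G G''/2) / G\<^sup>2\<close> for \<open>G = S\<^sup>2 P\<close> along a curve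
  with \<open>x' = p\<close> and \<open>x'' = q\<close>.
\<close>

lemma rot_angle_rhs_eq_curvature:
  fixes lam u p q K :: real
  defines "S \<equiv> sin u" and "C \<equiv> cos u"
    and "P \<equiv> 1 - lam * (sin u)\<^sup>2" and "Q \<equiv> 1 - 2 * lam * (sin u)\<^sup>2"
  assumes nz: "S \<noteq> 0" "C \<noteq> 0" "P \<noteq> 0" "Q \<noteq> 0"
    and K: "K = ((2 * S * C * Q * p)\<^sup>2 / 4
      - S\<^sup>2 * P * ((2 * (C\<^sup>2 - S\<^sup>2) * Q - 8 * lam * S\<^sup>2 * C\<^sup>2) * p\<^sup>2 + 2 * S * C * Q * q) / 2) / (S\<^sup>2 * P)\<^sup>2"
  shows "- q = rot_angle_rhs lam K u p"
proof -
  have key: "C\<^sup>2 * Q - P * (C\<^sup>2 - S\<^sup>2) - S\<^sup>2 * (1 - lam) = 0"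
    using sin_cos_squared_add[of u] unfolding S_def C_def P_def Q_def by algebra
  have "rot_angle_rhs lam K u p = S / C * (P / Q * K - p\<^sup>2 * ((1 - lam) / P + 4 * lam * C\<^sup>2 / Q))"
    unfolding rot_angle_rhs_def tan_def S_def C_def P_def Q_def ..
  also have "\<dots> = - q + p\<^sup>2 * (C\<^sup>2 * Q - P * (C\<^sup>2 - S\<^sup>2) - S\<^sup>2 * (1 - lam)) / (S * C * P)"
    unfolding K using nz by (simp add: field_simps power2_eq_square)
  finally show ?thesis
    unfolding key by simp
qed

lemma rot_gauss_curvature_unit_speed_eq:
  fixes \<tau> lam :: real and X Y :: "real \<Rightarrow> real"
  defines "g \<equiv> \<lambda>s. (sin (X s))\<^sup>2 * (1 - lam * (sin (X s))\<^sup>2)"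
    and "g' \<equiv> \<lambda>s. 2 * sin (X s) * cos (X s) * (1 - 2 * lam * (sin (X s))\<^sup>2) * deriv X s"
  assumes lam: "lam = 1 - \<tau>\<^sup>2" "lam < 1"
    and J: "open J" "\<sigma> \<in> J"
    and X: "n_differentiable_on 2 J X" and Y: "n_differentiable_on 2 J Y"
    and unit: "\<And>s. s \<in> J \<Longrightarrow> orbit_speed_sq \<tau> X Y s = 1"
    and g': "(g' has_real_derivative g'') (at \<sigma>)"
  shows "rot_gauss_curvature \<tau> X Y (\<sigma>, t) = ((g' \<sigma>)\<^sup>2 / 4 - g \<sigma> * g'' / 2) / (g \<sigma>)\<^sup>2"
  unfolding rot_gauss_curvature_def
proof (rule brioschi_K_t_independent_normalized[OF J _ _ _ _ _ _ g'])
  define e f where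
    "e s = (deriv X s)\<^sup>2 + (deriv Y s)\<^sup>2 * (cos (X s))\<^sup>2 * (1 - lam * (cos (X s))\<^sup>2)" and
    "f s = - lam * deriv Y s * (cos (X s))\<^sup>2 * (sin (X s))\<^sup>2" for s
  fix s t assume s: "s \<in> J"
  have X': "(X has_real_derivative deriv X s) (at s)"
      "(deriv X has_real_derivative deriv (deriv X) s) (at s)"
    and Y': "(Y has_real_derivative deriv Y s) (at s)"
      "(deriv Y has_real_derivative deriv (deriv Y) s) (at s)"
    using X Y s by (simp_all add: numeral_2_eq_2 DERIV_deriv_iff_real_differentiable)
  show "fff_E \<tau> (rot_surface X Y) (s, t) = e s" "fff_F \<tau> (rot_surface X Y) (s, t) = f s"
    "fff_G \<tau> (rot_surface X Y) (s, t) = g s"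
    using fff_E_rot_surface[OF X'(1) Y'(1)] fff_F_rot_surface[OF X'(1) Y'(1)] fff_G_rot_surface
    by (simp_all add: e_def f_def g_def lam(1))
  show "(e has_real_derivative deriv e s) (at s)" "(f has_real_derivative deriv f s) (at s)"
    unfolding DERIV_deriv_iff_real_differentiable real_differentiable_def e_def f_def
    using X' Y' by (auto intro!: exI derivative_eq_intros)
  show "(g has_real_derivative g' s) (at s)"
    unfolding g_def g'_def using X'(1)
    by (auto intro!: derivative_eq_intros simp: algebra_simps power2_eq_square)
  have "0 < 1 - lam * (sin (X s))\<^sup>2"
    using lam(2) by (rule one_minus_mult_sin_sq_pos)
  then have "(deriv X s)\<^sup>2 * (1 - lam * (sin (X s))\<^sup>2) + \<tau>\<^sup>2 * (cos (X s))\<^sup>2 * (deriv Y s)\<^sup>2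
      = 1 - lam * (sin (X s))\<^sup>2"
    using unit[OF s] unfolding orbit_speed_sq_def lam(1) by (simp add: field_simps)
  then show "e s * g s - (f s)\<^sup>2 = g s"
    unfolding e_def f_def g_def using sin_cos_squared_add[of "X s"] lam(1) by algebra
qed

lemma rot_gauss_curvature_unit_speed:
  fixes \<tau> lam :: real and X Y :: "real \<Rightarrow> real"
  assumes lam: "lam = 1 - \<tau>\<^sup>2" "lam < 1"
    and J: "open J" "\<sigma> \<in> J"
    and X: "n_differentiable_on 2 J X" and Y: "n_differentiable_on 2 J Y"
    and unit: "\<And>s. s \<in> J \<Longrightarrow> orbit_speed_sq \<tau> X Y s = 1"
    and nz: "sin (X \<sigma>) \<noteq> 0" "cos (X \<sigma>) \<noteq> 0" "1 - 2 * lam * (sin (X \<sigma>))\<^sup>2 \<noteq> 0"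
  shows "- deriv (deriv X) \<sigma> = rot_angle_rhs lam (rot_gauss_curvature \<tau> X Y (\<sigma>, t)) (X \<sigma>) (deriv X \<sigma>)"
proof -
  have "(X has_real_derivative deriv X \<sigma>) (at \<sigma>)" "(deriv X has_real_derivative deriv (deriv X) \<sigma>) (at \<sigma>)"
    using X J(2) by (simp_all add: numeral_2_eq_2 DERIV_deriv_iff_real_differentiable)
  then have "((\<lambda>s. 2 * sin (X s) * cos (X s) * (1 - 2 * lam * (sin (X s))\<^sup>2) * deriv X s) has_real_derivative
      (2 * ((cos (X \<sigma>))\<^sup>2 - (sin (X \<sigma>))\<^sup>2) * (1 - 2 * lam * (sin (X \<sigma>))\<^sup>2)
        - 8 * lam * (sin (X \<sigma>))\<^sup>2 * (cos (X \<sigma>))\<^sup>2) * (deriv X \<sigma>)\<^sup>2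
      + 2 * sin (X \<sigma>) * cos (X \<sigma>) * (1 - 2 * lam * (sin (X \<sigma>))\<^sup>2) * deriv (deriv X) \<sigma>) (at \<sigma>)"
    by (auto intro!: derivative_eq_intros simp: algebra_simps power2_eq_square)
  from rot_gauss_curvature_unit_speed_eq[OF lam J X Y unit this, of t] show ?thesis
    using one_minus_mult_sin_sq_pos[OF lam(2), of "X \<sigma>"] nz
    by (intro rot_angle_rhs_eq_curvature) (simp_all add: power_mult_distrib)
qed

section \<open>Unit-speed profile curves and their angle function\<close>

lemma orbit_speed_sq_compose:
  assumes "x differentiable (at (\<phi> \<sigma>))" "y differentiable (at (\<phi> \<sigma>))"
    and "(\<phi> has_real_derivative d) (at \<sigma>)"
  shows "orbit_speed_sq \<tau> (x \<circ> \<phi>) (y \<circ> \<phi>) \<sigma> = orbit_speed_sq \<tau> x y (\<phi> \<sigma>) * d\<^sup>2"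
proof -
  have "deriv (x \<circ> \<phi>) \<sigma> = deriv x (\<phi> \<sigma>) * d" "deriv (y \<circ> \<phi>) \<sigma> = deriv y (\<phi> \<sigma>) * d"
    using assms by (auto intro!: DERIV_imp_deriv DERIV_chain simp: DERIV_deriv_iff_real_differentiable)
  then show ?thesis
    unfolding orbit_speed_sq_def by (simp add: field_simps power2_eq_square)
qed

lemma orbit_speed_sq_n_differentiable_on:
  assumes I: "open I" and "\<tau> \<noteq> 0"
    and x: "n_differentiable_on (Suc n) I x" and y: "n_differentiable_on (Suc n) I y"
  shows "n_differentiable_on n I (orbit_speed_sq \<tau> x y)"
proof -
  have x': "n_differentiable_on n I x" "n_differentiable_on n I (deriv x)"
    and y': "n_differentiable_on n I (deriv y)"
    using x y n_differentiable_on_Suc_imp by auto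
  note sin_cos = n_differentiable_on_sin_cos_compose[OF I x'(1)]
  have P: "n_differentiable_on n I (\<lambda>s. 1 - (1 - \<tau>\<^sup>2) * (sin (x s))\<^sup>2)"
    by (rule n_differentiable_on_diff[OF I n_differentiable_on_const
          n_differentiable_on_mult[OF I n_differentiable_on_const
            n_differentiable_on_power2[OF I sin_cos(1)]]])
  have "0 < 1 - (1 - \<tau>\<^sup>2) * (sin (x s))\<^sup>2" for s
    using assms(2) by (intro one_minus_mult_sin_sq_pos) simp
  then have "n_differentiable_on n I (\<lambda>s. (deriv x s)\<^sup>2
      + \<tau>\<^sup>2 * (cos (x s))\<^sup>2 * (deriv y s)\<^sup>2 / (1 - (1 - \<tau>\<^sup>2) * (sin (x s))\<^sup>2))"
    by (intro n_differentiable_on_add[OF I n_differentiable_on_power2[OF I x'(2)]]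
        n_differentiable_on_divide[OF I n_differentiable_on_mult[OF I n_differentiable_on_mult[OF I
          n_differentiable_on_const n_differentiable_on_power2[OF I sin_cos(2)]]
          n_differentiable_on_power2[OF I y']] P]) (simp add: less_imp_neq[symmetric])
  then show ?thesis
    unfolding orbit_speed_sq_def .
qed

lemma orbit_speed_sq_pos:
  assumes "\<tau> \<noteq> 0" "cos (x s) \<noteq> 0" "(deriv x s, deriv y s) \<noteq> (0, 0)"
  shows "orbit_speed_sq \<tau> x y s > 0"
proof -
  have P: "0 < 1 - (1 - \<tau>\<^sup>2) * (sin (x s))\<^sup>2"
    using assms(1) by (intro one_minus_mult_sin_sq_pos) simp
  have "\<tau>\<^sup>2 * (cos (x s))\<^sup>2 * (deriv y s)\<^sup>2 / (1 - (1 - \<tau>\<^sup>2) * (sin (x s))\<^sup>2) \<ge> 0"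
    using P by simp
  moreover have "\<tau>\<^sup>2 * (cos (x s))\<^sup>2 * (deriv y s)\<^sup>2 / (1 - (1 - \<tau>\<^sup>2) * (sin (x s))\<^sup>2) > 0"
    if "deriv y s \<noteq> 0"
    using P assms(1,2) that by simp
  ultimately show ?thesis
    unfolding orbit_speed_sq_def using assms(3)
    by (cases "deriv x s = 0") (auto simp: add_pos_nonneg)
qed

lemma unit_speed_reparametrization:
  assumes \<tau>: "\<tau> \<noteq> 0" and I: "open I" "is_interval I"
    and x: "\<And>n. n_differentiable_on n I x" and y: "\<And>n. n_differentiable_on n I y"
    and cos_nz: "\<And>s. s \<in> I \<Longrightarrow> cos (x s) \<noteq> 0"
    and regular: "\<And>s. s \<in> I \<Longrightarrow> (deriv x s, deriv y s) \<noteq> (0, 0)"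
  obtains J \<phi> where "open J" "is_interval J" "bij_betw \<phi> J I" "\<And>n. n_differentiable_on n J \<phi>"
    "\<And>\<sigma>. \<sigma> \<in> J \<Longrightarrow> deriv \<phi> \<sigma> \<noteq> 0" "\<And>\<sigma>. \<sigma> \<in> J \<Longrightarrow> orbit_speed_sq \<tau> (x \<circ> \<phi>) (y \<circ> \<phi>) \<sigma> = 1"
proof -
  define L where "L s = sqrt (orbit_speed_sq \<tau> x y s)" for s
  have speed_pos: "orbit_speed_sq \<tau> x y s > 0" if "s \<in> I" for s
    using \<tau> cos_nz[OF that] regular[OF that] by (rule orbit_speed_sq_pos)
  have "n_differentiable_on n I L" for n
    unfolding L_def using speed_pos
    by (intro n_differentiable_on_compose[OF I(1) _ n_differentiable_on_sqrt
        orbit_speed_sq_n_differentiable_on[OF I(1) \<tau> x y]]) auto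
  moreover have L_pos: "L s > 0" if "s \<in> I" for s
    unfolding L_def using speed_pos[OF that] by simp
  ultimately obtain J \<phi> where J: "open J" "is_interval J" and bij: "bij_betw \<phi> J I"
    and \<phi>: "\<And>n. n_differentiable_on n J \<phi>"
    and \<phi>': "\<And>\<sigma>. \<sigma> \<in> J \<Longrightarrow> (\<phi> has_real_derivative inverse (L (\<phi> \<sigma>))) (at \<sigma>)"
    using reparametrization_with_speed[OF I] by metis
  have "deriv \<phi> \<sigma> \<noteq> 0" if "\<sigma> \<in> J" for \<sigma>
    using DERIV_imp_deriv[OF \<phi>'[OF that]] L_pos[OF bij_betw_apply[OF bij that]] by simp
  moreover have "orbit_speed_sq \<tau> (x \<circ> \<phi>) (y \<circ> \<phi>) \<sigma> = 1" if "\<sigma> \<in> J" for \<sigma>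
  proof -
    have s: "\<phi> \<sigma> \<in> I"
      using bij_betw_apply[OF bij that] .
    have "x differentiable (at (\<phi> \<sigma>))" "y differentiable (at (\<phi> \<sigma>))"
      using x[of 1] y[of 1] s by simp_all
    then have "orbit_speed_sq \<tau> (x \<circ> \<phi>) (y \<circ> \<phi>) \<sigma> = (L (\<phi> \<sigma>))\<^sup>2 * (inverse (L (\<phi> \<sigma>)))\<^sup>2"
      using orbit_speed_sq_compose[OF _ _ \<phi>'[OF that]] speed_pos[OF s] by (simp add: L_def)
    then show ?thesis
      using L_pos[OF s] by (simp add: field_simps)
  qed
  ultimately show ?thesis
    using that J bij \<phi> by blast
qed

lemma profile_sin_angle_n_differentiable_on:
  assumes J: "open J" and "lam < 1"
    and X: "n_differentiable_on (Suc n) J X" and Y: "n_differentiable_on (Suc n) J Y"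
  shows "n_differentiable_on n J (\<lambda>s. \<tau> * cos (X s) * deriv Y s / sqrt (1 - lam * (sin (X s))\<^sup>2))"
proof -
  have P_pos: "0 < 1 - lam * (sin (X s))\<^sup>2" for s
    using assms(2) by (rule one_minus_mult_sin_sq_pos)
  have Y': "n_differentiable_on n J (deriv Y)"
    using Y by (rule n_differentiable_on_deriv)
  note sin_cos = n_differentiable_on_sin_cos_compose[OF J n_differentiable_on_Suc_imp[OF X]]
  have "n_differentiable_on n J (\<lambda>s. sqrt (1 - lam * (sin (X s))\<^sup>2))"
    using P_pos
    by (intro n_differentiable_on_compose[OF J _ n_differentiable_on_sqrt n_differentiable_on_diff[OF J
        n_differentiable_on_const n_differentiable_on_mult[OF J n_differentiable_on_const
        n_differentiable_on_power2[OF J sin_cos(1)]]]]) auto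
  moreover have "sqrt (1 - lam * (sin (X s))\<^sup>2) \<noteq> 0" for s
    using P_pos[of s] by simp
  ultimately show ?thesis
    by (intro n_differentiable_on_divide[OF J n_differentiable_on_mult[OF J
        n_differentiable_on_mult[OF J n_differentiable_on_const sin_cos(2)] Y']])
qed

lemma profile_angle_function:
  fixes \<tau> lam :: real and X Y :: "real \<Rightarrow> real"
  assumes \<tau>: "\<tau> > 0" and lam: "lam = 1 - \<tau>\<^sup>2"
    and J: "open J" "is_interval J"
    and X: "n_differentiable_on 3 J X" and Y: "n_differentiable_on 3 J Y"
    and cos_nz: "\<And>s. s \<in> J \<Longrightarrow> cos (X s) \<noteq> 0"
    and unit: "\<And>s. s \<in> J \<Longrightarrow> orbit_speed_sq \<tau> X Y s = 1"
  obtains \<alpha> where "\<And>s. s \<in> J \<Longrightarrow> \<alpha> differentiable (at s)"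
    "\<And>s. s \<in> J \<Longrightarrow> deriv X s = cos (\<alpha> s)"
    "\<And>s. s \<in> J \<Longrightarrow> deriv Y s = 1 / \<tau> * (sqrt (1 - lam * (sin (X s))\<^sup>2) / cos (X s)) * sin (\<alpha> s)"
    "\<And>s. s \<in> J \<Longrightarrow> deriv \<alpha> s * sin (\<alpha> s) = - deriv (deriv X) s"
proof -
  define w where "w s = \<tau> * cos (X s) * deriv Y s / sqrt (1 - lam * (sin (X s))\<^sup>2)" for s
  have P_pos: "0 < 1 - lam * (sin (X s))\<^sup>2" for s
    using \<tau> lam by (intro one_minus_mult_sin_sq_pos) simp
  have X': "n_differentiable_on 2 J (deriv X)"
    using X unfolding numeral_3_eq_3 numeral_2_eq_2 by (rule n_differentiable_on_deriv)
  have "n_differentiable_on (Suc (Suc 0)) J w"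
    unfolding w_def using \<tau> lam
    by (intro profile_sin_angle_n_differentiable_on[OF J(1) _ X[unfolded numeral_3_eq_3]
        Y[unfolded numeral_3_eq_3]]) simp
  then have w: "n_differentiable_on 2 J w"
    by (simp only: numeral_2_eq_2)
  have X'_1: "n_differentiable_on 1 J (deriv X)" "n_differentiable_on 1 J (deriv (deriv X))"
    and w_1: "n_differentiable_on 1 J w" "n_differentiable_on 1 J (deriv w)"
    using X' w n_differentiable_on_mono[of 1 2] by (simp_all add: numeral_2_eq_2)
  then have "(deriv X has_real_derivative deriv (deriv X) s) (at s)"
    and "(w has_real_derivative deriv w s) (at s)" if "s \<in> J" for s
    using that unfolding One_nat_def by (simp_all add: DERIV_deriv_iff_real_differentiable)
  moreover have "n_differentiable_on 1 J (\<lambda>s. deriv X s * deriv w s - w s * deriv (deriv X) s)"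
    by (rule n_differentiable_on_diff[OF J(1) n_differentiable_on_mult[OF J(1) X'_1(1) w_1(2)]
          n_differentiable_on_mult[OF J(1) w_1(1) X'_1(2)]])
  then have "continuous_on J (\<lambda>s. deriv X s * deriv w s - w s * deriv (deriv X) s)"
    by (rule n_differentiable_on_imp_continuous_on[of 0, unfolded One_nat_def[symmetric]])
  moreover have "(deriv X s)\<^sup>2 + (w s)\<^sup>2 = 1" if "s \<in> J" for s
    using unit[OF that] P_pos[of s] unfolding orbit_speed_sq_def w_def lam
    by (simp add: power_divide power_mult_distrib)
  ultimately obtain \<alpha> where \<alpha>': "\<And>s. s \<in> J \<Longrightarrow> (\<alpha> has_real_derivative
        deriv X s * deriv w s - w s * deriv (deriv X) s) (at s)"
    and cos_\<alpha>: "\<And>s. s \<in> J \<Longrightarrow> cos (\<alpha> s) = deriv X s" and sin_\<alpha>: "\<And>s. s \<in> J \<Longrightarrow> sin (\<alpha> s) = w s"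
    using exists_angle_function[OF J] by blast
  have "deriv Y s = 1 / \<tau> * (sqrt (1 - lam * (sin (X s))\<^sup>2) / cos (X s)) * sin (\<alpha> s)" if "s \<in> J" for s
    using sin_\<alpha>[OF that] cos_nz[OF that] \<tau> P_pos[of s] unfolding w_def by (simp add: field_simps)
  moreover have "deriv \<alpha> s * sin (\<alpha> s) = - deriv (deriv X) s" if "s \<in> J" for s
    using deriv_cos_comp_on_open[OF J(1) that _ \<alpha>'[OF that], of "deriv X"] cos_\<alpha>
      DERIV_imp_deriv[OF \<alpha>'[OF that]]
    by (simp add: mult.commute)
  ultimately show ?thesis
    using that \<alpha>' cos_\<alpha> real_differentiable_def by (metis (no_types, lifting))
qed

lemma rot_profile_reparametrization_ode:
  fixes \<tau> lam :: real and I :: "real set" and x y :: "real \<Rightarrow> real"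
  assumes tau_pos: "\<tau> > 0" and lam_def: "lam = 1 - \<tau>\<^sup>2"
    and I_open: "open I" and I_interval: "is_interval I"
    and x_smooth: "smooth_on I x" and y_smooth: "smooth_on I y"
    and sin_pos: "\<forall>s\<in>I. sin (x s) > 0"
    and cos_nz: "\<forall>s\<in>I. cos (x s) \<noteq> 0"
    and den_nz: "\<forall>s\<in>I. 1 - 2 * lam * (sin (x s))\<^sup>2 \<noteq> 0"
    and regular: "\<forall>s\<in>I. (deriv x s, deriv y s) \<noteq> (0, 0)"
  shows "\<exists>J \<phi>. open J \<and> is_interval J \<and> bij_betw \<phi> J I \<and> smooth_on J \<phi> \<and> (\<forall>\<sigma>\<in>J. deriv \<phi> \<sigma> \<noteq> 0) \<and>
    (\<exists>\<alpha>. \<forall>\<sigma>\<in>J. \<alpha> differentiable (at \<sigma>) \<and> deriv (x \<circ> \<phi>) \<sigma> = cos (\<alpha> \<sigma>) \<and>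
      deriv (y \<circ> \<phi>) \<sigma> = 1 / \<tau> * (sqrt (1 - lam * (sin (x (\<phi> \<sigma>)))\<^sup>2) / cos (x (\<phi> \<sigma>))) * sin (\<alpha> \<sigma>) \<and>
      (\<forall>t. deriv \<alpha> \<sigma> * sin (\<alpha> \<sigma>) =
        rot_angle_rhs lam (rot_gauss_curvature \<tau> (x \<circ> \<phi>) (y \<circ> \<phi>) (\<sigma>, t)) (x (\<phi> \<sigma>)) (cos (\<alpha> \<sigma>))))"
proof -
  have lam: "lam < 1"
    using tau_pos lam_def by simp
  have x: "n_differentiable_on n I x" and y: "n_differentiable_on n I y" for n
    using x_smooth y_smooth smooth_on_iff_n_differentiable_on[OF I_open] by blast+
  obtain J \<phi> where J: "open J" "is_interval J" and bij: "bij_betw \<phi> J I"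
    and \<phi>: "\<And>n. n_differentiable_on n J \<phi>" and \<phi>': "\<And>\<sigma>. \<sigma> \<in> J \<Longrightarrow> deriv \<phi> \<sigma> \<noteq> 0"
    and unit: "\<And>\<sigma>. \<sigma> \<in> J \<Longrightarrow> orbit_speed_sq \<tau> (x \<circ> \<phi>) (y \<circ> \<phi>) \<sigma> = 1"
    using unit_speed_reparametrization[where \<tau> = \<tau>, OF _ I_open I_interval x y] tau_pos cos_nz regular
    by auto
  have \<phi>_I: "\<phi> \<sigma> \<in> I" if "\<sigma> \<in> J" for \<sigma>
    using bij_betw_apply[OF bij that] .
  have X: "n_differentiable_on n J (x \<circ> \<phi>)" and Y: "n_differentiable_on n J (y \<circ> \<phi>)" for n
    unfolding comp_def using \<phi>_I by (auto intro: n_differentiable_on_compose[OF J(1) _ _ \<phi>] x y)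
  obtain \<alpha> where \<alpha>: "\<And>\<sigma>. \<sigma> \<in> J \<Longrightarrow> \<alpha> differentiable (at \<sigma>)"
    "\<And>\<sigma>. \<sigma> \<in> J \<Longrightarrow> deriv (x \<circ> \<phi>) \<sigma> = cos (\<alpha> \<sigma>)"
    "\<And>\<sigma>. \<sigma> \<in> J \<Longrightarrow> deriv (y \<circ> \<phi>) \<sigma> =
       1 / \<tau> * (sqrt (1 - lam * (sin ((x \<circ> \<phi>) \<sigma>))\<^sup>2) / cos ((x \<circ> \<phi>) \<sigma>)) * sin (\<alpha> \<sigma>)"
    "\<And>\<sigma>. \<sigma> \<in> J \<Longrightarrow> deriv \<alpha> \<sigma> * sin (\<alpha> \<sigma>) = - deriv (deriv (x \<circ> \<phi>)) \<sigma>"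
    using profile_angle_function[OF tau_pos lam_def J X Y _ unit] cos_nz \<phi>_I by auto
  have "- deriv (deriv (x \<circ> \<phi>)) \<sigma> = rot_angle_rhs lam (rot_gauss_curvature \<tau> (x \<circ> \<phi>) (y \<circ> \<phi>) (\<sigma>, t))
      ((x \<circ> \<phi>) \<sigma>) (deriv (x \<circ> \<phi>) \<sigma>)" if "\<sigma> \<in> J" for \<sigma> t
    using sin_pos cos_nz den_nz \<phi>_I[OF that]
    by (intro rot_gauss_curvature_unit_speed[OF lam_def lam J(1) that X Y unit]) auto
  then show ?thesis
    using J bij \<phi> \<phi>' \<alpha> smooth_on_iff_n_differentiable_on[OF J(1)]
    by (intro exI[of _ J] exI[of _ \<phi>] conjI exI[of _ \<alpha>] ballI allI) auto
qed

section \<open>Conservation of energy\<close>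

definition rot_energy :: "real \<Rightarrow> real \<Rightarrow> real \<Rightarrow> real \<Rightarrow> real" where
  "rot_energy lam K u p =
     (1 - 2 * lam * (sin u)\<^sup>2)\<^sup>2 / (1 - lam * (sin u)\<^sup>2) * (cos u)\<^sup>2 * p\<^sup>2
     + K * (1 - lam * (sin u)\<^sup>2) * (sin u)\<^sup>2"

lemma rot_energy_coefficient_has_derivative:
  fixes lam v :: real
  defines "S \<equiv> sin v" and "C \<equiv> cos v"
    and "P \<equiv> 1 - lam * (sin v)\<^sup>2" and "Q \<equiv> 1 - 2 * lam * (sin v)\<^sup>2"
  assumes "P \<noteq> 0"
  shows "((\<lambda>v. (1 - 2 * lam * (sin v)\<^sup>2)\<^sup>2 * (cos v)\<^sup>2 / (1 - lam * (sin v)\<^sup>2)) has_real_derivative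
    - 2 * S * C * Q * (Q * (P - lam * C\<^sup>2) / P\<^sup>2 + 4 * lam * C\<^sup>2 / P)) (at v)"
proof -
  have "((\<lambda>v. (1 - 2 * lam * (sin v)\<^sup>2)\<^sup>2 * (cos v)\<^sup>2 / (1 - lam * (sin v)\<^sup>2)) has_real_derivative
      ((2 * Q * (- 4 * lam * S * C) * C\<^sup>2 + Q\<^sup>2 * (- 2 * S * C)) * P
        - Q\<^sup>2 * C\<^sup>2 * (- 2 * lam * S * C)) / (P * P))
      (at v)"
    using assms(5) unfolding S_def C_def P_def Q_def
    by (auto intro!: derivative_eq_intros simp: algebra_simps power2_eq_square)
  moreover have "((2 * Q * (- 4 * lam * S * C) * C\<^sup>2 + Q\<^sup>2 * (- 2 * S * C)) * P
      - Q\<^sup>2 * C\<^sup>2 * (- 2 * lam * S * C)) / (P * P)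
    = - 2 * S * C * Q * (Q * (P - lam * C\<^sup>2) / P\<^sup>2 + 4 * lam * C\<^sup>2 / P)"
    using assms(5) by (simp add: field_simps power2_eq_square)
  ultimately show ?thesis
    by simp
qed

text \<open>
  With \<open>A = Q\<^sup>2 C\<^sup>2 / P\<close> and \<open>B = P S\<^sup>2\<close> one has
  \<open>A' = - 2 tan u A ((1 - lam) / P + 4 lam C\<^sup>2 / Q)\<close> and \<open>B' = 2 tan u A P / Q\<close>:
  this is why the derivative of the energy is a multiple of the angle equation.
\<close>

lemma rot_energy_has_derivative:
  fixes lam K a s :: real and u \<alpha> :: "real \<Rightarrow> real"
  defines "S \<equiv> sin (u s)" and "C \<equiv> cos (u s)"
    and "P \<equiv> 1 - lam * (sin (u s))\<^sup>2" and "Q \<equiv> 1 - 2 * lam * (sin (u s))\<^sup>2"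
  assumes lam: "lam < 1" and nz: "C \<noteq> 0" "Q \<noteq> 0"
    and u: "(u has_real_derivative cos (\<alpha> s)) (at s)" and \<alpha>: "(\<alpha> has_real_derivative a) (at s)"
  shows "((\<lambda>s. rot_energy lam K (u s) (cos (\<alpha> s))) has_real_derivative
      - 2 * cos (\<alpha> s) * Q\<^sup>2 * C\<^sup>2 / P * (a * sin (\<alpha> s) - rot_angle_rhs lam K (u s) (cos (\<alpha> s)))) (at s)"
proof -
  have P: "P > 0"
    unfolding P_def using lam by (rule one_minus_mult_sin_sq_pos)
  define A B where "A v = (1 - 2 * lam * (sin v)\<^sup>2)\<^sup>2 * (cos v)\<^sup>2 / (1 - lam * (sin v)\<^sup>2)"
    and "B v = (1 - lam * (sin v)\<^sup>2) * (sin v)\<^sup>2" for v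
  have "(A has_real_derivative - 2 * S * C * Q * (Q * (P - lam * C\<^sup>2) / P\<^sup>2 + 4 * lam * C\<^sup>2 / P)) (at (u s))"
    unfolding A_def S_def C_def P_def Q_def using P[unfolded P_def]
    by (intro rot_energy_coefficient_has_derivative) simp
  moreover have "(B has_real_derivative 2 * S * C * Q) (at (u s))"
    unfolding B_def S_def C_def Q_def
    by (auto intro!: derivative_eq_intros simp: field_simps power2_eq_square)
  ultimately have energy_deriv: "((\<lambda>s. A (u s) * (cos (\<alpha> s))\<^sup>2 + K * B (u s)) has_real_derivative
      - 2 * S * C * Q * (Q * (P - lam * C\<^sup>2) / P\<^sup>2 + 4 * lam * C\<^sup>2 / P) * cos (\<alpha> s) * (cos (\<alpha> s))\<^sup>2
      + A (u s) * (2 * cos (\<alpha> s) * (- sin (\<alpha> s) * a)) + K * (2 * S * C * Q * cos (\<alpha> s))) (at s)"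
    using u \<alpha> by (auto intro!: derivative_eq_intros DERIV_chain2[where f = A] DERIV_chain2[where f = B])
  have energy_eq: "(\<lambda>s. rot_energy lam K (u s) (cos (\<alpha> s))) = (\<lambda>s. A (u s) * (cos (\<alpha> s))\<^sup>2 + K * B (u s))"
    unfolding rot_energy_def A_def B_def by (simp add: field_simps)
  have "1 - lam = P - lam * C\<^sup>2"
    using sin_cos_squared_add[of "u s"] unfolding P_def C_def by algebra
  then have rhs: "rot_angle_rhs lam K (u s) (cos (\<alpha> s)) =
      S / C * (P / Q * K - (cos (\<alpha> s))\<^sup>2 * ((P - lam * C\<^sup>2) / P + 4 * lam * C\<^sup>2 / Q))"
    unfolding rot_angle_rhs_def tan_def S_def C_def P_def Q_def by simp
  have "A (u s) = Q\<^sup>2 * C\<^sup>2 / P"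
    unfolding A_def Q_def C_def P_def ..
  then have "- 2 * S * C * Q * (Q * (P - lam * C\<^sup>2) / P\<^sup>2 + 4 * lam * C\<^sup>2 / P) * cos (\<alpha> s) * (cos (\<alpha> s))\<^sup>2
      + A (u s) * (2 * cos (\<alpha> s) * (- sin (\<alpha> s) * a)) + K * (2 * S * C * Q * cos (\<alpha> s))
    = - 2 * cos (\<alpha> s) * Q\<^sup>2 * C\<^sup>2 / P * (a * sin (\<alpha> s) - rot_angle_rhs lam K (u s) (cos (\<alpha> s)))"
    unfolding rhs using P nz by (simp add: field_simps power2_eq_square)
  with energy_deriv show ?thesis
    unfolding energy_eq by simp
qed

lemma rot_energy_constant:
  fixes lam K :: real and J :: "real set" and u \<alpha> :: "real \<Rightarrow> real"
  assumes lam: "lam < 1" and J: "is_interval J"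
    and diff: "\<And>s. s \<in> J \<Longrightarrow> u differentiable (at s)" "\<And>s. s \<in> J \<Longrightarrow> \<alpha> differentiable (at s)"
    and nz: "\<And>s. s \<in> J \<Longrightarrow> cos (u s) \<noteq> 0" "\<And>s. s \<in> J \<Longrightarrow> 1 - 2 * lam * (sin (u s))\<^sup>2 \<noteq> 0"
    and u_eq: "\<And>s. s \<in> J \<Longrightarrow> deriv u s = cos (\<alpha> s)"
    and \<alpha>_eq: "\<And>s. s \<in> J \<Longrightarrow> deriv \<alpha> s * sin (\<alpha> s) = rot_angle_rhs lam K (u s) (cos (\<alpha> s))"
  shows "\<exists>c. \<forall>s\<in>J. rot_energy lam K (u s) (cos (\<alpha> s)) = c"
proof -
  have "((\<lambda>s. rot_energy lam K (u s) (cos (\<alpha> s))) has_real_derivative 0) (at s)" if s: "s \<in> J" for s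
  proof -
    have "(u has_real_derivative cos (\<alpha> s)) (at s)" "(\<alpha> has_real_derivative deriv \<alpha> s) (at s)"
      using diff[OF s] u_eq[OF s] by (simp_all add: DERIV_deriv_iff_real_differentiable[symmetric])
    from rot_energy_has_derivative[OF lam nz[OF s] this, of K] show ?thesis
      using \<alpha>_eq[OF s] by simp
  qed
  then obtain c where "\<And>s. s \<in> J \<Longrightarrow> rot_energy lam K (u s) (cos (\<alpha> s)) = c"
    using DERIV_zero_imp_constant_on_interval[OF J] by blast
  then show ?thesis
    by blast
qed

theorem lemma3p1:
  fixes \<tau> lam :: real and I :: "real set" and x y :: "real \<Rightarrow> real"
  assumes tau_pos: "\<tau> > 0"
    and lam_def: "lam = 1 - \<tau>\<^sup>2"
    and I_open: "open I" and I_interval: "is_interval I" and I_ne: "I \<noteq> {}"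
    and x_smooth: "smooth_on I x" and y_smooth: "smooth_on I y"
    and sin_pos: "\<forall>s\<in>I. sin (x s) > 0"
    and cos_nz: "\<forall>s\<in>I. cos (x s) \<noteq> 0"
    and den_nz: "\<forall>s\<in>I. 1 - 2 * lam * (sin (x s))\<^sup>2 \<noteq> 0"
    and regular: "\<forall>s\<in>I. (deriv x s, deriv y s) \<noteq> (0, 0)"
  shows
    "(\<exists>J \<phi>. open J \<and> is_interval J \<and> bij_betw \<phi> J I \<and> smooth_on J \<phi> \<and>
        (\<forall>\<sigma>\<in>J. deriv \<phi> \<sigma> \<noteq> 0) \<and>
        (\<exists>\<alpha> :: real \<Rightarrow> real. \<forall>\<sigma>\<in>J.
            \<alpha> differentiable (at \<sigma>) \<and>
            deriv (x \<circ> \<phi>) \<sigma> = cos (\<alpha> \<sigma>) \<and>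
            deriv (y \<circ> \<phi>) \<sigma> = (1 / \<tau>) * (sqrt (1 - lam * (sin (x (\<phi> \<sigma>)))\<^sup>2) / cos (x (\<phi> \<sigma>))) * sin (\<alpha> \<sigma>) \<and>
            (\<forall>t. deriv \<alpha> \<sigma> * sin (\<alpha> \<sigma>) =
               tan (x (\<phi> \<sigma>)) *
                 ((1 - lam * (sin (x (\<phi> \<sigma>)))\<^sup>2) / (1 - 2 * lam * (sin (x (\<phi> \<sigma>)))\<^sup>2)
                     * rot_gauss_curvature \<tau> (x \<circ> \<phi>) (y \<circ> \<phi>) (\<sigma>, t)
                  - (cos (\<alpha> \<sigma>))\<^sup>2 * ((1 - lam) / (1 - lam * (sin (x (\<phi> \<sigma>)))\<^sup>2)
                     + 4 * lam * (cos (x (\<phi> \<sigma>)))\<^sup>2 / (1 - 2 * lam * (sin (x (\<phi> \<sigma>)))\<^sup>2))))))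
     \<and>
     (\<forall>(K :: real) (J :: real set) (u :: real \<Rightarrow> real) (v :: real \<Rightarrow> real) (\<alpha> :: real \<Rightarrow> real).
        open J \<and> is_interval J \<and>
        (\<forall>s\<in>J. u differentiable (at s) \<and> v differentiable (at s) \<and> \<alpha> differentiable (at s) \<and>
            cos (u s) \<noteq> 0 \<and> 1 - 2 * lam * (sin (u s))\<^sup>2 \<noteq> 0 \<and>
            deriv u s = cos (\<alpha> s) \<and>
            deriv v s = (1 / \<tau>) * (sqrt (1 - lam * (sin (u s))\<^sup>2) / cos (u s)) * sin (\<alpha> s) \<and>
            deriv \<alpha> s * sin (\<alpha> s) =
               tan (u s) *
                 ((1 - lam * (sin (u s))\<^sup>2) / (1 - 2 * lam * (sin (u s))\<^sup>2) * K
                  - (cos (\<alpha> s))\<^sup>2 * ((1 - lam) / (1 - lam * (sin (u s))\<^sup>2)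
                     + 4 * lam * (cos (u s))\<^sup>2 / (1 - 2 * lam * (sin (u s))\<^sup>2))))
        \<longrightarrow> (\<exists>c. \<forall>s\<in>J.
              (1 - 2 * lam * (sin (u s))\<^sup>2)\<^sup>2 / (1 - lam * (sin (u s))\<^sup>2) * (cos (u s))\<^sup>2 * (cos (\<alpha> s))\<^sup>2
              + K * (1 - lam * (sin (u s))\<^sup>2) * (sin (u s))\<^sup>2 = c))"
proof (intro conjI allI impI, goal_cases)
  case 1
  show ?case
    using rot_profile_reparametrization_ode[OF tau_pos lam_def I_open I_interval x_smooth y_smooth
        sin_pos cos_nz den_nz regular]
    unfolding rot_angle_rhs_def .
next
  case (2 K J u v \<alpha>)
  then have "\<exists>c. \<forall>s\<in>J. rot_energy lam K (u s) (cos (\<alpha> s)) = c"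
    using tau_pos lam_def by (intro rot_energy_constant) (auto simp: rot_angle_rhs_def)
  then show ?case
    unfolding rot_energy_def .
qed

end
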